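(* For every integer $r\ge 1$, $$\sum_{n=1}^{\infty}\frac{n4^n}{(4n^2-1)(4n+2r+1)}\frac{\binom{2n}{n}}{\binom{4n+2r}{2n+r}}=\frac{1}{\sqrt{2}}\sum_{k=0}^{r-1}\frac{(-1)^k}{(2k+1)2^{2r-k+1}}\binom{r-1}{k}\mathcal{B}(k)-\frac{\varphi(2r+1)}{2^{2r+2}},$$ where $\mathcal{B}(k)=\int_0^{1/2}\frac{t^k}{\sqrt{1-t}}\,\mathrm{d}t$ and $\varphi(2k+1)=\int_0^1 t^{2k+1}\sqrt{1+t^2}\,\mathrm{d}t$. *)

theory Defs
  imports "HOL-Analysis.Analysis"
begin

definition calB :: "nat \<Rightarrow> real" where
  "calB k = integral {0..1/2} (\<lambda>t. t ^ k / sqrt (1 - t))"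

definition phi :: "nat \<Rightarrow> real" where
  "phi m = integral {0..1} (\<lambda>t. t ^ m * sqrt (1 + t\<^sup>2))"

end

theory Submission
  imports Defs
begin

text \<open>
  Write c(n) = binom(2n, n) / 4^n. Wallis' integral int_0^1 (1 - s^2)^m ds = 1 / ((2m + 1) c(m)), taken at
  m = 2n + r, turns the reciprocal binomial coefficient of the n-th summand into an integral. The remaining
  factor 4n c(n) / (4n^2 - 1) = c(n) / (2n + 1) - c(n) / (1 - 2n) is the n-th coefficient of
  arcsin v / v - sqrt (1 - v^2), by the binomial series of (1 - v^2)^(-1/2) (integrated termwise) and of
  (1 - v^2)^(1/2). Summing under the integral by monotone convergence, 4^(r+1) times the series is
  int_0^1 K (1 - s^2) ds with K v = v^(r-1) arcsin v - v^r sqrt (1 - v^2).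

  Integrating the arcsin part by parts against the polynomial primitive of (1 - s^2)^(r-1) leaves integrals
  of s^(2k+1) / sqrt (2 - s^2), which are B(k) up to a factor after substituting s^2 = 2t. The square-root
  part equals phi(2r + 1) because the substitutions u = 1 - s^2 and u = t^2 reduce both to
  (1/2) int_0^1 u^r sqrt (1 + u) du.
\<close>

definition central_binom_ratio :: "nat \<Rightarrow> real" where
  "central_binom_ratio n = real ((2 * n) choose n) / 4 ^ n"

lemma central_binom_ratio_0 [simp]: "central_binom_ratio 0 = 1"
  by (simp add: central_binom_ratio_def)

lemma central_binom_ratio_fact: "central_binom_ratio n = fact (2 * n) / (fact n ^ 2 * 4 ^ n)"
  by (simp add: central_binom_ratio_def binomial_fact mult_2 power2_eq_square)

lemma central_binom_ratio_Suc:
  "central_binom_ratio (Suc n) = central_binom_ratio n * (2 * real n + 1) / (2 * real n + 2)"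
proof -
  have num: "fact (2 * Suc n) = (2 * real n + 2) * (2 * real n + 1) * fact (2 * n)"
    by (simp add: algebra_simps)
  have den: "fact (Suc n) ^ 2 * 4 ^ Suc n = (2 * real n + 2) ^ 2 * (fact n ^ 2 * 4 ^ n)"
    by (simp add: power2_eq_square algebra_simps)
  have "central_binom_ratio (Suc n)
      = (2 * real n + 2) * (2 * real n + 1) * fact (2 * n) / ((2 * real n + 2) ^ 2 * (fact n ^ 2 * 4 ^ n))"
    unfolding central_binom_ratio_fact num den ..
  also have "\<dots> = central_binom_ratio n * (2 * real n + 1) / (2 * real n + 2)"
  proof -
    have cancel: "a * b * F / (a ^ 2 * D) = F / D * b / a" if "a \<noteq> 0" for a b F D :: real
      using that by (simp add: power2_eq_square mult_ac)
    show ?thesis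
      unfolding central_binom_ratio_fact by (rule cancel) linarith
  qed
  finally show ?thesis .
qed

lemma central_binom_ratio_pos: "central_binom_ratio n > 0"
  by (simp add: central_binom_ratio_def)

lemma central_binom_ratio_le_1: "central_binom_ratio n \<le> 1"
proof (induction n)
  case (Suc n)
  then show ?case
    using mult_left_le[of "central_binom_ratio n" "2 * real n + 1"] central_binom_ratio_pos[of n]
    by (simp add: central_binom_ratio_Suc field_simps)
qed simp

lemma gbinomial_minus_half: "((- (1/2)) gchoose n) = (-1) ^ n * central_binom_ratio n"
proof (induction n)
  case (Suc n)
  have "real (Suc n) * ((- (1/2)) gchoose Suc n) = (- (1/2) - real n) * ((- (1/2)) gchoose n)"
    using gbinomial_absorption[of n "- (1/2)::real"] gbinomial_absorb_comp[of "- (1/2)::real" n] by simp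
  then show ?case
    using Suc by (simp add: central_binom_ratio_Suc field_simps)
qed simp

lemma gbinomial_half: "((1/2) gchoose n) = (-1) ^ n * central_binom_ratio n / (1 - 2 * real n)"
proof -
  have "(1/2 - real n) * ((1/2) gchoose n) = 1/2 * ((-1) ^ n * central_binom_ratio n)"
    using gbinomial_absorb_comp[of "1/2::real" n] gbinomial_minus_half[of n] by simp
  then have "(1 - 2 * real n) * ((1/2) gchoose n) = (-1) ^ n * central_binom_ratio n"
    by (simp add: algebra_simps)
  moreover have "1 - 2 * real n \<noteq> 0"
    using of_nat_eq_iff[of "2 * n" 1] by auto
  ultimately show ?thesis
    by (simp add: eq_divide_eq mult.commute)
qed

lemma power_neg_square: "(- (x::real)\<^sup>2) ^ n = (-1) ^ n * x ^ (2 * n)"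
  by (simp add: power_mult power_minus[of "x\<^sup>2"])

lemma inverse_sqrt_series:
  fixes v :: real
  assumes "\<bar>v\<bar> < 1"
  shows "(\<lambda>n. central_binom_ratio n * v ^ (2 * n)) sums (1 / sqrt (1 - v\<^sup>2))"
proof -
  have "\<bar>- v\<^sup>2\<bar> < 1" and "1 - v\<^sup>2 > 0"
    using assms by (simp_all add: abs_square_less_1)
  then have "(\<lambda>n. ((- (1/2)) gchoose n) * (- v\<^sup>2) ^ n) sums (1 / sqrt (1 - v\<^sup>2))"
    using gen_binomial_real[of "- v\<^sup>2" "- (1/2)"] by (simp add: powr_minus_divide powr_half_sqrt)
  moreover have "((- (1/2)) gchoose n) * (- v\<^sup>2) ^ n = central_binom_ratio n * v ^ (2 * n)" for n
    by (simp add: gbinomial_minus_half power_neg_square mult_ac flip: power_add)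
  ultimately show ?thesis
    by simp
qed

lemma sqrt_one_minus_square_series:
  fixes v :: real
  assumes "\<bar>v\<bar> < 1"
  shows "(\<lambda>n. central_binom_ratio n / (1 - 2 * real n) * v ^ (2 * n)) sums sqrt (1 - v\<^sup>2)"
proof -
  have "\<bar>- v\<^sup>2\<bar> < 1"
    using assms by (simp add: abs_square_less_1)
  then have "(\<lambda>n. ((1/2) gchoose n) * (- v\<^sup>2) ^ n) sums sqrt (1 - v\<^sup>2)"
    using sqrt_series by fastforce
  moreover have "((1/2) gchoose n) * (- v\<^sup>2) ^ n = central_binom_ratio n / (1 - 2 * real n) * v ^ (2 * n)" for n
    by (simp add: gbinomial_half power_neg_square mult_ac flip: power_add)
  ultimately show ?thesis
    by simp
qed

lemma uniform_limit_inverse_sqrt_series: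
  fixes a :: real
  assumes "\<bar>a\<bar> < 1"
  shows "uniform_limit {-a..a} (\<lambda>n x. \<Sum>i<n. central_binom_ratio i * x ^ (2 * i))
           (\<lambda>x. \<Sum>i. central_binom_ratio i * x ^ (2 * i)) sequentially"
proof (rule Weierstrass_m_test)
  show "norm (central_binom_ratio n * x ^ (2 * n)) \<le> (a\<^sup>2) ^ n" if "x \<in> {-a..a}" for n x
  proof -
    have "norm (central_binom_ratio n * x ^ (2 * n)) = central_binom_ratio n * \<bar>x\<bar> ^ (2 * n)"
      using central_binom_ratio_pos[of n] by (simp add: abs_mult power_abs)
    also have "\<dots> \<le> 1 * \<bar>x\<bar> ^ (2 * n)"
      using central_binom_ratio_le_1[of n] by (intro mult_right_mono) auto
    also have "\<dots> \<le> (a\<^sup>2) ^ n"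
    proof -
      have "\<bar>x\<bar> \<le> a"
        using that by auto
      then have "x\<^sup>2 \<le> a\<^sup>2"
        using power_mono[of "\<bar>x\<bar>" a 2] by simp
      then show ?thesis
        by (simp add: power_mult power_mono)
    qed
    finally show ?thesis .
  qed
  show "summable (\<lambda>n. (a\<^sup>2) ^ n)"
    using assms by (simp add: summable_geometric abs_square_less_1)
qed

lemma has_real_derivative_odd_power_div:
  "((\<lambda>x. c * x ^ (2 * n + 1) / (2 * real n + 1)) has_real_derivative c * x ^ (2 * n))
     (at x within S)"
proof -
  have "((\<lambda>x. x ^ (2 * n + 1)) has_real_derivative (2 * real n + 1) * x ^ (2 * n)) (at x within S)"
    using DERIV_pow[of "2 * n + 1" x S] by (simp add: add.commute)
  from DERIV_cdivide[OF DERIV_cmult[OF this, of c], of "2 * real n + 1"] show ?thesis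
    by (simp add: add_nonneg_eq_0_iff)
qed

lemma arcsin_series:
  fixes v :: real
  assumes "\<bar>v\<bar> < 1"
  shows "(\<lambda>n. central_binom_ratio n * v ^ (2 * n + 1) / (2 * real n + 1)) sums arcsin v"
proof -
  define a where "a = (1 + \<bar>v\<bar>) / 2"
  define S where "S = {-a..a}"
  have "\<bar>v\<bar> \<le> a" "\<bar>a\<bar> < 1"
    using assms by (simp_all add: a_def)
  then have "0 \<in> S" "v \<in> S" and S_abs: "\<And>x. x \<in> S \<Longrightarrow> \<bar>x\<bar> < 1"
    by (auto simp: S_def abs_le_iff)
  have term_deriv: "((\<lambda>x. central_binom_ratio n * x ^ (2 * n + 1) / (2 * real n + 1))
      has_field_derivative central_binom_ratio n * x ^ (2 * n)) (at x within S)" for n x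
    by (rule has_real_derivative_odd_power_div)
  have "convex S"
    by (simp add: S_def)
  have unif: "uniform_limit S (\<lambda>n x. \<Sum>i<n. central_binom_ratio i * x ^ (2 * i))
      (\<lambda>x. \<Sum>i. central_binom_ratio i * x ^ (2 * i)) sequentially"
    unfolding S_def using \<open>\<bar>a\<bar> < 1\<close> by (rule uniform_limit_inverse_sqrt_series)
  have summable_0: "summable (\<lambda>n. central_binom_ratio n * 0 ^ (2 * n + 1) / (2 * real n + 1))"
    by simp
  obtain g where g: "\<And>x. x \<in> S \<Longrightarrow>
      (\<lambda>n. central_binom_ratio n * x ^ (2 * n + 1) / (2 * real n + 1)) sums g x \<and>
      (g has_field_derivative (\<Sum>i. central_binom_ratio i * x ^ (2 * i))) (at x within S)"
    using has_field_derivative_series[OF \<open>convex S\<close> term_deriv unif \<open>0 \<in> S\<close> summable_0] by blast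
  have "((\<lambda>x. g x - arcsin x) has_field_derivative 0) (at x within S)" if "x \<in> S" for x
  proof -
    have x: "\<bar>x\<bar> < 1"
      using S_abs that .
    have "(g has_field_derivative 1 / sqrt (1 - x\<^sup>2)) (at x within S)"
      using g[OF that] inverse_sqrt_series[OF x] by (simp add: sums_iff)
    moreover have "(arcsin has_field_derivative 1 / sqrt (1 - x\<^sup>2)) (at x within S)"
      using DERIV_arcsin[of x] x by (auto intro: has_field_derivative_at_within simp: divide_inverse)
    ultimately show ?thesis
      using DERIV_diff by fastforce
  qed
  from has_field_derivative_zero_constant[OF \<open>convex S\<close> this]
  obtain c where c: "\<And>x. x \<in> S \<Longrightarrow> g x - arcsin x = c"
    by blast
  have "g 0 = 0"
    using g[OF \<open>0 \<in> S\<close>] by (simp add: sums_iff)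
  then have "g v = arcsin v"
    using c[OF \<open>0 \<in> S\<close>] c[OF \<open>v \<in> S\<close>] by simp
  then show ?thesis
    using g[OF \<open>v \<in> S\<close>] by simp
qed

definition arcsin_kernel_coeff :: "nat \<Rightarrow> real" where
  "arcsin_kernel_coeff n = central_binom_ratio n * (4 * real n) / (4 * real n ^ 2 - 1)"

definition arcsin_kernel :: "nat \<Rightarrow> real \<Rightarrow> real" where
  "arcsin_kernel r v = v ^ (r - 1) * arcsin v - v ^ r * sqrt (1 - v\<^sup>2)"

lemma arcsin_kernel_coeff_nonneg: "arcsin_kernel_coeff n \<ge> 0"
proof (cases n)
  case (Suc m)
  then have "real n ^ 2 \<ge> 1"
    by (simp add: one_le_power)
  then have "4 * real n ^ 2 - 1 > 0"
    by simp
  then show ?thesis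
    using central_binom_ratio_pos[of n] by (simp add: arcsin_kernel_coeff_def)
qed (simp add: arcsin_kernel_coeff_def)

lemma arcsin_kernel_coeff_eq:
  "arcsin_kernel_coeff n = central_binom_ratio n / (2 * real n + 1) - central_binom_ratio n / (1 - 2 * real n)"
proof -
  have "2 * real n + 1 \<noteq> 0" "1 - 2 * real n \<noteq> 0"
    using of_nat_eq_iff[of "2 * n" 1] by auto
  then have "1 / (2 * real n + 1) - 1 / (1 - 2 * real n) = - (4 * real n) / ((2 * real n + 1) * (1 - 2 * real n))"
    by (simp add: field_simps)
  also have "(2 * real n + 1) * (1 - 2 * real n) = - (4 * real n ^ 2 - 1)"
    by (simp add: power2_eq_square algebra_simps)
  finally have "4 * real n / (4 * real n ^ 2 - 1) = 1 / (2 * real n + 1) - 1 / (1 - 2 * real n)"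
    by (simp flip: divide_minus_right)
  then have "arcsin_kernel_coeff n = central_binom_ratio n * (1 / (2 * real n + 1) - 1 / (1 - 2 * real n))"
    unfolding arcsin_kernel_coeff_def by (metis times_divide_eq_right)
  then show ?thesis
    by (simp add: right_diff_distrib)
qed

lemma arcsin_kernel_series:
  fixes v :: real
  assumes "r \<ge> 1" "\<bar>v\<bar> < 1"
  shows "(\<lambda>n. arcsin_kernel_coeff n * v ^ (2 * n + r)) sums arcsin_kernel r v"
proof -
  have "(\<lambda>n. central_binom_ratio n * v ^ (2 * n + 1) / (2 * real n + 1) * v ^ (r - 1)
           - central_binom_ratio n / (1 - 2 * real n) * v ^ (2 * n) * v ^ r)
        sums (arcsin v * v ^ (r - 1) - sqrt (1 - v\<^sup>2) * v ^ r)"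
    by (intro sums_diff sums_mult2 arcsin_series sqrt_one_minus_square_series assms)
  moreover have "central_binom_ratio n * v ^ (2 * n + 1) / (2 * real n + 1) * v ^ (r - 1)
           - central_binom_ratio n / (1 - 2 * real n) * v ^ (2 * n) * v ^ r
        = arcsin_kernel_coeff n * v ^ (2 * n + r)" for n
  proof -
    have "2 * n + r = (2 * n + 1) + (r - 1)"
      using assms(1) by simp
    then have "v ^ (2 * n + 1) * v ^ (r - 1) = v ^ (2 * n + r)" "v ^ (2 * n) * v ^ r = v ^ (2 * n + r)"
      by (metis power_add)+
    then show ?thesis
      unfolding arcsin_kernel_coeff_eq by (simp add: algebra_simps)
  qed
  ultimately show ?thesis
    by (simp add: arcsin_kernel_def mult.commute)
qed

lemma has_integral_one_minus_square_power:
  "((\<lambda>s::real. (1 - s\<^sup>2) ^ m) has_integral 1 / ((2 * real m + 1) * central_binom_ratio m)) {0..1}"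
proof (induction m)
  case 0
  show ?case
    using has_integral_const_real[of "1::real" 0 1] by simp
next
  case (Suc m)
  define W where "W = 1 / ((2 * real m + 1) * central_binom_ratio m)"
  \<comment> \<open>integration by parts: s (1 - s^2)^(m+1) vanishes at 0 and at 1\<close>
  have "((\<lambda>s. (2 * real m + 3) * (1 - s\<^sup>2) ^ Suc m - (2 * real m + 2) * (1 - s\<^sup>2) ^ m)
          has_integral 0) {0..1::real}"
  proof -
    have "((\<lambda>s. s * (1 - s\<^sup>2) ^ Suc m) has_real_derivative
            (2 * real m + 3) * (1 - x\<^sup>2) ^ Suc m - (2 * real m + 2) * (1 - x\<^sup>2) ^ m) (at x within {0..1})"
      for x :: real
      by (rule derivative_eq_intros refl | simp add: power2_eq_square algebra_simps)+
    from fundamental_theorem_of_calculus[OF _ this[unfolded has_real_derivative_iff_has_vector_derivative]]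
    show ?thesis
      by simp
  qed
  from has_integral_add[OF this has_integral_mult_right[OF Suc.IH[folded W_def], of "2 * real m + 2"]]
  have "((\<lambda>s. (2 * real m + 3) * (1 - s\<^sup>2) ^ Suc m) has_integral (2 * real m + 2) * W) {0..1::real}"
    by simp
  from has_integral_mult_right[OF this, of "1 / (2 * real m + 3)"]
  have "((\<lambda>s. (1 - s\<^sup>2) ^ Suc m) has_integral (2 * real m + 2) / (2 * real m + 3) * W) {0..1::real}"
    by (simp add: add_nonneg_eq_0_iff)
  moreover have "(2 * real m + 2) / (2 * real m + 3) * W = 1 / ((2 * real (Suc m) + 1) * central_binom_ratio (Suc m))"
    using central_binom_ratio_pos[of m] by (simp add: W_def central_binom_ratio_Suc field_simps)
  ultimately show ?case
    by simp
qed

lemma sums_integral_of_nonneg_series: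
  fixes f :: "nat \<Rightarrow> 'a::euclidean_space \<Rightarrow> real"
  assumes int: "\<And>n. (f n has_integral w n) S"
    and nonneg: "\<And>n x. x \<in> S \<Longrightarrow> 0 \<le> f n x"
    and sums: "\<And>x. x \<in> S \<Longrightarrow> (\<lambda>n. f n x) sums g x"
    and g: "(g has_integral I) S"
  shows "w sums I"
proof -
  define F where "F k x = (\<Sum>n<k. f n x)" for k x
  have F_int: "(F k has_integral (\<Sum>n<k. w n)) S" for k
    unfolding F_def[abs_def] by (intro has_integral_sum int) simp
  have F_le_g: "F k x \<le> g x" if "x \<in> S" for k x
    unfolding F_def using sums[OF that] nonneg[OF that] sum_le_suminf[of "\<lambda>n. f n x" "{..<k}"]
    by (simp add: sums_iff)
  have "bounded (range (\<lambda>k. integral S (F k)))"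
  proof (rule boundedI)
    fix y assume "y \<in> range (\<lambda>k. integral S (F k))"
    then obtain k where y: "y = (\<Sum>n<k. w n)"
      using F_int integral_unique by blast
    have "0 \<le> (\<Sum>n<k. w n)"
      using has_integral_nonneg[OF int nonneg] by (simp add: sum_nonneg)
    moreover have "(\<Sum>n<k. w n) \<le> I"
      using has_integral_le[OF F_int g F_le_g] .
    ultimately show "norm y \<le> I"
      using y by simp
  qed
  moreover have "F k x \<le> F (Suc k) x" if "x \<in> S" for k x
    unfolding F_def using nonneg[OF that] by simp
  moreover have "(\<lambda>k. F k x) \<longlonglongrightarrow> g x" if "x \<in> S" for x
    using sums[OF that] unfolding F_def sums_def .
  moreover have "F k integrable_on S" for k
    using F_int by blast
  ultimately have "(\<lambda>k. integral S (F k)) \<longlonglongrightarrow> integral S g"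
    using monotone_convergence_increasing[of F S g] by simp
  moreover have "integral S (F k) = (\<Sum>n<k. w n)" for k
    using F_int by (rule integral_unique)
  ultimately show ?thesis
    unfolding sums_def using g by (simp add: integral_unique)
qed

lemma has_integral_substitution_square:
  fixes h :: "real \<Rightarrow> real"
  assumes "continuous_on {0..1} h"
  shows "((\<lambda>x. x * h (x\<^sup>2)) has_integral integral {0..1} h / 2) {0..1}"
proof -
  have "((\<lambda>x. (2 * x) *\<^sub>R h (x\<^sup>2)) has_integral integral {0\<^sup>2..1\<^sup>2} h) {0..1}"
    by (rule has_integral_substitution[OF _ _ _ assms])
       (auto intro!: derivative_eq_intros simp: power_le_one)
  from has_integral_mult_right[OF this, of "1/2"] show ?thesis
    by simp
qed

lemma has_integral_substitution_one_minus_square: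
  fixes h :: "real \<Rightarrow> real"
  assumes "continuous_on {0..1} h"
  shows "((\<lambda>x. x * h (1 - x\<^sup>2)) has_integral integral {0..1} h / 2) {0..1}"
proof -
  have "((\<lambda>x. (- 2 * x) *\<^sub>R h (1 - x\<^sup>2)) has_integral
          integral {1 - 0\<^sup>2..1 - 1\<^sup>2} h - integral {1 - 1\<^sup>2..1 - 0\<^sup>2} h) {0..1}"
    by (rule has_integral_substitution_general[where s = "{}", OF _ _ _ assms])
       (auto intro!: derivative_eq_intros continuous_intros simp: power_le_one)
  from has_integral_mult_right[OF this, of "- 1/2"] show ?thesis
    by simp
qed

lemma has_integral_phi:
  "((\<lambda>s. (1 - s\<^sup>2) ^ r * (s * sqrt (2 - s\<^sup>2))) has_integral phi (2 * r + 1)) {0..1}"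
proof -
  define h where "h u = u ^ r * sqrt (1 + u)" for u :: real
  have "continuous_on {0..1} h"
    unfolding h_def by (intro continuous_intros)
  note square = has_integral_substitution_square[OF this]
    and one_minus_square = has_integral_substitution_one_minus_square[OF this]
  have "(\<lambda>t. t ^ (2 * r + 1) * sqrt (1 + t\<^sup>2)) = (\<lambda>t. t * h (t\<^sup>2))"
    by (rule ext) (simp add: h_def flip: power_mult)
  then have "phi (2 * r + 1) = integral {0..1} h / 2"
    unfolding phi_def by (simp only: integral_unique[OF square])
  moreover have "(\<lambda>s. s * h (1 - s\<^sup>2)) = (\<lambda>s. (1 - s\<^sup>2) ^ r * (s * sqrt (2 - s\<^sup>2)))"
    by (rule ext) (simp add: h_def)
  ultimately show ?thesis
    using one_minus_square by (simp only:)
qed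

lemma has_integral_odd_power_div_sqrt:
  "((\<lambda>s. s ^ (2 * k + 1) / sqrt (2 - s\<^sup>2)) has_integral 2 ^ k * calB k / sqrt 2) {0..1}"
proof -
  define f where "f t = t ^ k / sqrt (1 - t)" for t :: real
  have "((\<lambda>s. s *\<^sub>R f (s\<^sup>2 / 2)) has_integral integral {0\<^sup>2 / 2..1\<^sup>2 / 2} f) {0..1}"
    by (rule has_integral_substitution[where c = 0 and d = "1/2"])
       (auto intro!: derivative_eq_intros continuous_intros simp: f_def power_le_one)
  moreover have "integral {0\<^sup>2 / 2..1\<^sup>2 / 2} f = calB k"
    by (simp add: calB_def f_def[abs_def])
  moreover have "s *\<^sub>R f (s\<^sup>2 / 2) = sqrt 2 / 2 ^ k * (s ^ (2 * k + 1) / sqrt (2 - s\<^sup>2))"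
    if "s \<in> {0..1}" for s :: real
  proof -
    have "sqrt (1 - s\<^sup>2 / 2) = sqrt (2 - s\<^sup>2) / sqrt 2"
      by (simp add: real_sqrt_divide[symmetric] diff_divide_distrib)
    moreover have "(s\<^sup>2 / 2) ^ k = s ^ (2 * k) / 2 ^ k"
      by (simp add: power_divide flip: power_mult)
    moreover have "sqrt (2 - s\<^sup>2) \<noteq> 0"
      using that power_le_one[of s 2] by simp
    ultimately show ?thesis
      unfolding f_def by (simp add: field_simps)
  qed
  ultimately have "((\<lambda>s. sqrt 2 / 2 ^ k * (s ^ (2 * k + 1) / sqrt (2 - s\<^sup>2))) has_integral calB k) {0..1}"
    using has_integral_cong[of "{0..1}"] by (metis (no_types, lifting))
  from has_integral_mult_right[OF this, of "2 ^ k / sqrt 2"] show ?thesis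
    by simp
qed

lemma sqrt_one_minus_square_one_minus_square:
  fixes s :: real
  assumes "0 \<le> s"
  shows "sqrt (1 - (1 - s\<^sup>2)\<^sup>2) = s * sqrt (2 - s\<^sup>2)"
proof -
  have "1 - (1 - s\<^sup>2)\<^sup>2 = s\<^sup>2 * (2 - s\<^sup>2)"
    by (simp add: power2_eq_square algebra_simps)
  then show ?thesis
    using assms by (simp add: real_sqrt_mult)
qed

definition one_minus_square_power_primitive :: "nat \<Rightarrow> real \<Rightarrow> real" where
  "one_minus_square_power_primitive n s =
     (\<Sum>k=0..n. (-1) ^ k * real (n choose k) * s ^ (2 * k + 1) / (2 * real k + 1))"

lemma one_minus_square_power_primitive_0 [simp]: "one_minus_square_power_primitive n 0 = 0"
  by (simp add: one_minus_square_power_primitive_def)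

lemma one_minus_square_power_expand:
  "(1 - x\<^sup>2) ^ n = (\<Sum>k=0..n. (-1) ^ k * real (n choose k) * x ^ (2 * k))"
proof -
  have "(1 - x\<^sup>2) ^ n = (- x\<^sup>2 + 1) ^ n"
    by simp
  also have "\<dots> = (\<Sum>k\<le>n. real (n choose k) * (- x\<^sup>2) ^ k * 1 ^ (n - k))"
    by (rule binomial_ring)
  finally show ?thesis
    by (simp add: atLeast0AtMost power_neg_square mult_ac)
qed

lemma has_real_derivative_one_minus_square_power_primitive:
  "(one_minus_square_power_primitive n has_real_derivative (1 - x\<^sup>2) ^ n) (at x)"
  unfolding one_minus_square_power_primitive_def[abs_def] one_minus_square_power_expand
  by (intro DERIV_sum has_real_derivative_odd_power_div)

lemma has_real_derivative_arcsin_one_minus_square: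
  fixes x :: real
  assumes "0 < x" "x < 1"
  shows "((\<lambda>s. arcsin (1 - s\<^sup>2)) has_real_derivative - 2 / sqrt (2 - x\<^sup>2)) (at x)"
proof -
  have "x\<^sup>2 < 1"
    using assms by (simp add: abs_square_less_1)
  then have "((\<lambda>s. arcsin (1 - s\<^sup>2)) has_real_derivative
            inverse (sqrt (1 - (1 - x\<^sup>2)\<^sup>2)) * (- 2 * x)) (at x)"
    using assms by (intro DERIV_chain2[OF DERIV_arcsin]) (auto intro!: derivative_eq_intros)
  then show ?thesis
    using assms by (simp add: sqrt_one_minus_square_one_minus_square field_simps)
qed

lemma has_integral_primitive_div_sqrt:
  "((\<lambda>x. 2 * one_minus_square_power_primitive n x / sqrt (2 - x\<^sup>2)) has_integral
     (\<Sum>k=0..n. (-1) ^ k * real (n choose k) * 2 ^ (k + 1) / (2 * real k + 1) * calB k) / sqrt 2) {0..1}"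
proof -
  have "((\<lambda>x. \<Sum>k=0..n. (-1) ^ k * real (n choose k) / (2 * real k + 1) * 2 * (x ^ (2 * k + 1) / sqrt (2 - x\<^sup>2)))
    has_integral (\<Sum>k=0..n. (-1) ^ k * real (n choose k) / (2 * real k + 1) * 2 * (2 ^ k * calB k / sqrt 2))) {0..1}"
    by (intro has_integral_sum has_integral_mult_right has_integral_odd_power_div_sqrt) auto
  moreover have "(\<lambda>x. \<Sum>k=0..n. (-1) ^ k * real (n choose k) / (2 * real k + 1) * 2 * (x ^ (2 * k + 1) / sqrt (2 - x\<^sup>2)))
      = (\<lambda>x. 2 * one_minus_square_power_primitive n x / sqrt (2 - x\<^sup>2))"
    unfolding one_minus_square_power_primitive_def sum_distrib_left sum_divide_distrib
    by (intro ext sum.cong) simp_all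
  moreover have "(\<Sum>k=0..n. (-1) ^ k * real (n choose k) / (2 * real k + 1) * 2 * (2 ^ k * calB k / sqrt 2))
      = (\<Sum>k=0..n. (-1) ^ k * real (n choose k) * 2 ^ (k + 1) / (2 * real k + 1) * calB k) / sqrt 2"
    unfolding sum_divide_distrib by (rule sum.cong) simp_all
  ultimately show ?thesis
    by (simp only:)
qed

lemma has_integral_one_minus_square_power_arcsin:
  "((\<lambda>s. (1 - s\<^sup>2) ^ n * arcsin (1 - s\<^sup>2)) has_integral
     (\<Sum>k=0..n. (-1) ^ k * real (n choose k) * 2 ^ (k + 1) / (2 * real k + 1) * calB k) / sqrt 2) {0..1}"
proof -
  define Q where "Q = one_minus_square_power_primitive n"
  define F where "F s = Q s * arcsin (1 - s\<^sup>2)" for s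
  have "continuous_on {0..1} Q"
    unfolding Q_def using has_real_derivative_one_minus_square_power_primitive
    by (meson DERIV_continuous continuous_at_imp_continuous_on)
  moreover have "continuous_on {0..1::real} (\<lambda>s. arcsin (1 - s\<^sup>2))"
    by (intro continuous_on_arcsin continuous_intros)
       (auto simp: power_le_one intro: order_trans[OF power_le_one])
  ultimately have "continuous_on {0..1} F"
    unfolding F_def by (rule continuous_on_mult)
  moreover have "(F has_real_derivative (1 - x\<^sup>2) ^ n * arcsin (1 - x\<^sup>2) - 2 * Q x / sqrt (2 - x\<^sup>2)) (at x)"
    if "x \<in> {0<..<1}" for x :: real
    unfolding F_def Q_def
    using DERIV_mult[OF has_real_derivative_one_minus_square_power_primitive
        has_real_derivative_arcsin_one_minus_square] that
    by (simp add: algebra_simps)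
  ultimately have parts: "((\<lambda>x. (1 - x\<^sup>2) ^ n * arcsin (1 - x\<^sup>2) - 2 * Q x / sqrt (2 - x\<^sup>2))
      has_integral F 1 - F 0) {0..1::real}"
    by (intro fundamental_theorem_of_calculus_interior)
       (auto simp: has_real_derivative_iff_has_vector_derivative[symmetric])
  have "F 1 - F 0 = 0"
    by (simp add: F_def Q_def)
  with has_integral_add[OF parts has_integral_primitive_div_sqrt[of n, folded Q_def]] show ?thesis
    by simp
qed

definition arcsin_kernel_integral :: "nat \<Rightarrow> real" where
  "arcsin_kernel_integral r =
     (\<Sum>k=0..r-1. (-1) ^ k * real ((r - 1) choose k) * 2 ^ (k + 1) / (2 * real k + 1) * calB k) / sqrt 2
     - phi (2 * r + 1)"

lemma has_integral_arcsin_kernel: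
  "((\<lambda>s. arcsin_kernel r (1 - s\<^sup>2)) has_integral arcsin_kernel_integral r) {0..1}"
proof -
  have "((\<lambda>s. (1 - s\<^sup>2) ^ (r - 1) * arcsin (1 - s\<^sup>2) - (1 - s\<^sup>2) ^ r * (s * sqrt (2 - s\<^sup>2)))
      has_integral arcsin_kernel_integral r) {0..1}"
    unfolding arcsin_kernel_integral_def
    by (intro has_integral_diff has_integral_one_minus_square_power_arcsin has_integral_phi)
  moreover have "arcsin_kernel r (1 - s\<^sup>2)
      = (1 - s\<^sup>2) ^ (r - 1) * arcsin (1 - s\<^sup>2) - (1 - s\<^sup>2) ^ r * (s * sqrt (2 - s\<^sup>2))"
    if "s \<in> {0..1}" for s :: real
    using that by (simp add: arcsin_kernel_def sqrt_one_minus_square_one_minus_square)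
  ultimately show ?thesis
    using has_integral_cong[of "{0..1}"] by (metis (no_types, lifting))
qed

lemma arcsin_kernel_coeff_sums:
  assumes "r \<ge> 1"
  shows "(\<lambda>n. arcsin_kernel_coeff n / ((2 * real (2 * n + r) + 1) * central_binom_ratio (2 * n + r)))
     sums arcsin_kernel_integral r"
proof (rule sums_integral_of_nonneg_series
    [where f = "\<lambda>n s. arcsin_kernel_coeff n * (1 - s\<^sup>2) ^ (2 * n + r)" and S = "{0<..<1}"
       and g = "\<lambda>s. arcsin_kernel r (1 - s\<^sup>2)"])
  show "((\<lambda>s. arcsin_kernel_coeff n * (1 - s\<^sup>2) ^ (2 * n + r)) has_integral
      arcsin_kernel_coeff n / ((2 * real (2 * n + r) + 1) * central_binom_ratio (2 * n + r))) {0<..<1}" for n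
    using has_integral_mult_right[OF has_integral_one_minus_square_power[of "2 * n + r"],
        of "arcsin_kernel_coeff n"]
    by (simp add: has_integral_Icc_iff_Ioo)
  show "((\<lambda>s. arcsin_kernel r (1 - s\<^sup>2)) has_integral arcsin_kernel_integral r) {0<..<1}"
    using has_integral_arcsin_kernel by (simp add: has_integral_Icc_iff_Ioo)
  fix s :: real
  assume "s \<in> {0<..<1}"
  then have "0 \<le> 1 - s\<^sup>2" "\<bar>1 - s\<^sup>2\<bar> < 1"
    by (auto simp: power_le_one abs_square_less_1)
  then show "(\<lambda>n. arcsin_kernel_coeff n * (1 - s\<^sup>2) ^ (2 * n + r)) sums arcsin_kernel r (1 - s\<^sup>2)"
    using arcsin_kernel_series[OF assms] by simp
  show "0 \<le> arcsin_kernel_coeff n * (1 - s\<^sup>2) ^ (2 * n + r)" for n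
    using arcsin_kernel_coeff_nonneg \<open>0 \<le> 1 - s\<^sup>2\<close> by simp
qed

lemma summand_eq_arcsin_kernel_term:
  "real n * 4 ^ n / ((4 * real n ^ 2 - 1) * (4 * real n + 2 * real r + 1))
     * (real ((2 * n) choose n) / real ((4 * n + 2 * r) choose (2 * n + r)))
   = arcsin_kernel_coeff n / ((2 * real (2 * n + r) + 1) * central_binom_ratio (2 * n + r)) / 4 ^ (r + 1)"
proof -
  have cancel: "a * Y / (D * E) * (P / Q) = P / Y * (4 * a) / D / (E * (Q / (Y * Y * Z))) / (4 * Z)"
    if "Q \<noteq> 0" "D \<noteq> 0" "E \<noteq> 0" "Y \<noteq> 0" "Z \<noteq> 0" for a P Q D E Y Z :: real
    using that by (simp add: field_simps)
  have denom: "4 * real n ^ 2 - 1 \<noteq> 0"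
  proof (cases "n = 0")
    case False
    then have "real n ^ 2 \<ge> 1"
      by (simp add: one_le_power)
    then show ?thesis
      by simp
  qed simp
  have powers: "(4::real) ^ (2 * n + r) = 4 ^ n * 4 ^ n * 4 ^ r" "(4::real) ^ (r + 1) = 4 * 4 ^ r"
    by (simp_all add: mult_2 power_add)
  have indices: "2 * (2 * n + r) = 4 * n + 2 * r" "2 * real (2 * n + r) + 1 = 4 * real n + 2 * real r + 1"
    by simp_all
  show ?thesis
    unfolding arcsin_kernel_coeff_def central_binom_ratio_def powers indices
    by (rule cancel[OF _ denom]) simp_all
qed

lemma arcsin_kernel_integral_div_power_4:
  assumes "r \<ge> 1"
  shows "arcsin_kernel_integral r / 4 ^ (r + 1)
    = 1 / sqrt 2 * (\<Sum>k = 0..r - 1. (-1) ^ k / ((2 * real k + 1) * 2 ^ (2 * r - k + 1))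
                                        * real ((r - 1) choose k) * calB k)
      - phi (2 * r + 1) / 2 ^ (2 * r + 2)"
proof -
  have four: "(4::real) ^ (r + 1) = 2 ^ (2 * r + 2)"
    by (simp add: power_mult flip: power_mult_distrib)
  have "(-1) ^ k * real ((r - 1) choose k) * 2 ^ (k + 1) / (2 * real k + 1) * calB k / 2 ^ (2 * r + 2)
      = (-1) ^ k / ((2 * real k + 1) * 2 ^ (2 * r - k + 1)) * real ((r - 1) choose k) * calB k"
    if "k \<in> {0..r-1}" for k
  proof -
    have cancel: "c * t / d * B / (t * X) = c / (d * X) * B" if "t \<noteq> 0" for c t d B X :: real
      using that by simp
    have "(2::real) ^ (2 * r + 2) = 2 ^ (k + 1) * 2 ^ (2 * r - k + 1)"
      using that by (simp flip: power_add)
    then show ?thesis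
      using cancel[of "2 ^ (k + 1)"] by (simp add: ac_simps)
  qed
  then have sum_rescaled: "(\<Sum>k=0..r-1. (-1) ^ k * real ((r - 1) choose k) * 2 ^ (k + 1) / (2 * real k + 1) * calB k)
        / 2 ^ (2 * r + 2)
      = (\<Sum>k = 0..r - 1. (-1) ^ k / ((2 * real k + 1) * 2 ^ (2 * r - k + 1)) * real ((r - 1) choose k) * calB k)"
    unfolding sum_divide_distrib by (rule sum.cong[OF refl])
  have rescale: "(S / c - p) / X = 1 / c * (S / X) - p / X" for S c p X :: real
    by (simp add: diff_divide_distrib)
  show ?thesis
    unfolding arcsin_kernel_integral_def four rescale sum_rescaled ..
qed

theorem theorem3p0p6:
  fixes r :: nat
  assumes "r \<ge> 1"
  shows "(\<lambda>n. real (n + 1) * 4 ^ (n + 1)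
              / ((4 * real (n + 1) ^ 2 - 1) * (4 * real (n + 1) + 2 * real r + 1))
              * (real ((2 * (n + 1)) choose (n + 1))
                 / real ((4 * (n + 1) + 2 * r) choose (2 * (n + 1) + r))))
         sums
         (1 / sqrt 2 * (\<Sum>k = 0..r - 1. (-1) ^ k / ((2 * real k + 1) * 2 ^ (2 * r - k + 1))
                                        * real ((r - 1) choose k) * calB k)
          - phi (2 * r + 1) / 2 ^ (2 * r + 2))"
proof -
  define w where "w n = arcsin_kernel_coeff n / ((2 * real (2 * n + r) + 1) * central_binom_ratio (2 * n + r))"
    for n
  have "w sums arcsin_kernel_integral r"
    unfolding w_def using assms by (rule arcsin_kernel_coeff_sums)
  moreover have "w 0 = 0"
    by (simp add: w_def arcsin_kernel_coeff_def)
  ultimately have "(\<lambda>n. w (n + 1)) sums arcsin_kernel_integral r"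
    using sums_Suc_iff[of w] by simp
  from sums_divide[OF this, of "4 ^ (r + 1)"] show ?thesis
    unfolding w_def summand_eq_arcsin_kernel_term[symmetric] arcsin_kernel_integral_div_power_4[OF assms] .
qed

end
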